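(* Let $X\subseteq\mathbb{R}^n$ be a nonempty closed convex set with $0\in X$, $\|\cdot\|$ the Euclidean norm, $D(x\|x')=\frac12\|x-x'\|^2$, and $\max_{x,x'\in X}D(x\|x')\le F^2$. Let $f_1,f_2,\dots$ be i.i.d. random convex differentiable functions $\mathbb{R}^n\to\mathbb{R}$ drawn from a fixed distribution $p$, such that almost surely $\|\nabla f_t(x)\|\le L$ for all $x\in X$ and $\|\nabla f_t(x)-\nabla f_t(x')\|\le H\|x-x'\|$ for all $x,x'$, where $H\ge\frac{L}{4F\sqrt\tau}$. Let $f^*(x)=\mathbb{E}_{f\sim p}[f(x)]$ and let $x^*\in X$ be a minimizer of $f^*$ over $X$. Let $\tau\ge1$, $T\in\mathbb{N}$, and run delayed stochastic gradient descent: $x_1=\dots=x_{\tau+1}=0$, $g_t=\nabla f_t(x_t)$, $x_{t+1}=\operatorname{argmin}_{x\in X}\|x-(x_t-\eta_tg_{t-\tau})\|$ for $t=\tau+1,\dots,T+\tau$, with $\eta_t=\sigma/\sqrt{t-\tau}$ and $\sigma=F/L$. Then the regret $R[X]=\sum_{t=1}^T(f_t(x_t)-f_t(x^* ))$ satisfies $$\mathbb{E}[R[X]]\le\Big[28.3F^2H+\tfrac23FL+\tfrac43F^2H\log T\Big]\tau^2+\tfrac83FL\sqrt T.$$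
   Context: $\log$ denotes the natural logarithm. *)

theory Defs
  imports "HOL-Probability.Probability"
begin

definition grad :: "('a::real_inner \<Rightarrow> real) \<Rightarrow> 'a \<Rightarrow> 'a" where
  "grad f x = (THE D. GDERIV f x :> D)"

text \<open>Delayed projected SGD iterates x_1, x_2, ... (index 0 is unused and set to 0).
  x_1 = ... = x_{tau+1} = 0 and for t \<ge> tau+1:
  x_{t+1} = closest point of X to x_t - eta_t * grad f_{t-tau}(x_{t-tau}),
  with eta_t = sigma / sqrt (t - tau).\<close>
fun dsgd :: "'a::euclidean_space set \<Rightarrow> nat \<Rightarrow> real \<Rightarrow> (nat \<Rightarrow> 'a \<Rightarrow> real) \<Rightarrow> nat \<Rightarrow> 'a" where
  "dsgd X \<tau> \<sigma> fs 0 = 0"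
| "dsgd X \<tau> \<sigma> fs (Suc t) =
     (if t \<le> \<tau> then 0
      else closest_point X
             (dsgd X \<tau> \<sigma> fs t
              - (\<sigma> / sqrt (real (t - \<tau>))) *\<^sub>R grad (fs (t - \<tau>)) (dsgd X \<tau> \<sigma> fs (t - \<tau>))))"

end

theory Submission
  imports Defs
begin

text \<open>
  Write \<open>x t\<close> for the iterates. Shifted by \<open>\<tau>\<close>, they form projected online gradient descent
  driven by the stale gradients \<open>grad (f t) (x t)\<close>, whose linearized regret against any
  point of \<open>X\<close> is at most \<open>2 F L sqrt T\<close>. Convexity and \<open>H\<close>-smoothness bound
  \<open>f t (x (t + \<tau>)) - f t xs\<close> by that linear term plus \<open>H * norm (x t - x (t + \<tau>))\<^sup>2\<close>; as
  the iterates move by at most \<open>F / sqrt (k - \<tau>)\<close> per step, these drift terms add up to at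
  most \<open>\<tau>\<^sup>2 F\<^sup>2 (1 + ln T)\<close>. Returning from \<open>f t (x (t + \<tau>))\<close> to \<open>f t (x t)\<close> costs a
  telescoping sum of \<open>\<tau>\<close> boundary terms, each at most \<open>L sqrt 2 F\<close>, together with the
  differences \<open>f (t + \<tau>) (x (t + \<tau>)) - f t (x (t + \<tau>))\<close> and \<open>f (1 + k) 0 - f (T + 1 + k) 0\<close>.
  These have mean zero: the losses are i.i.d. and \<open>x (t + \<tau>)\<close> depends only on
  \<open>f 1, \<dots>, f (t - 1)\<close>. Finally \<open>H \<ge> L / (4 F sqrt \<tau>)\<close> absorbs \<open>\<tau> L sqrt 2 F\<close> into the
  \<open>F\<^sup>2 H \<tau>\<^sup>2\<close> term.
\<close>

section \<open>Gradients of convex functions\<close>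

lemma has_gderiv_grad:
  fixes f :: "'a::euclidean_space \<Rightarrow> real"
  assumes "f differentiable at x"
  shows "GDERIV f x :> grad f x"
proof -
  from assms obtain f' where f': "(f has_derivative f') (at x)"
    unfolding differentiable_def by blast
  define D where "D = adjoint f' 1"
  have "f' = (\<lambda>h. h \<bullet> D)"
    using adjoint_works[OF has_derivative_linear[OF f']] by (auto simp: D_def)
  then have D: "GDERIV f x :> D"
    unfolding gderiv_def using f' by simp
  have "E = D" if "GDERIV f x :> E" for E
  proof -
    have "(\<lambda>h. h \<bullet> E) = (\<lambda>h. h \<bullet> D)"
      using that D unfolding gderiv_def by (rule has_derivative_unique)
    then have "(E - D) \<bullet> (E - D) = 0"
      by (metis inner_diff_left inner_commute right_minus_eq)
    then show "E = D" by simp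
  qed
  then have "grad f x = D"
    unfolding grad_def using D by (rule the_equality[rotated])
  with D show ?thesis by simp
qed

lemma convex_on_above_gderiv_tangent:
  fixes f :: "'a::real_inner \<Rightarrow> real"
  assumes convex: "convex_on UNIV f" and D: "GDERIV f c :> D"
  shows "f c + (x - c) \<bullet> D \<le> f x"
proof -
  define g where "g t = f (c + t *\<^sub>R (x - c))" for t
  have "convex_on UNIV g"
  proof (rule convex_onI)
    fix a t u :: real assume "0 < a" "a < 1"
    have "c + ((1 - a) *\<^sub>R t + a *\<^sub>R u) *\<^sub>R (x - c)
        = (1 - a) *\<^sub>R (c + t *\<^sub>R (x - c)) + a *\<^sub>R (c + u *\<^sub>R (x - c))"
      by (simp add: algebra_simps)
    then show "g ((1 - a) *\<^sub>R t + a *\<^sub>R u) \<le> (1 - a) * g t + a * g u"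
      using convex_onD[OF convex, of a "c + t *\<^sub>R (x - c)" "c + u *\<^sub>R (x - c)"] \<open>0 < a\<close> \<open>a < 1\<close>
      by (simp add: g_def)
  qed simp
  moreover have "(g has_field_derivative (x - c) \<bullet> D) (at 0)"
  proof -
    have "((\<lambda>t. c + t *\<^sub>R (x - c)) has_derivative (\<lambda>t. t *\<^sub>R (x - c))) (at 0)"
      by (auto intro!: derivative_eq_intros)
    moreover have "(f has_derivative (\<lambda>h. h \<bullet> D)) (at (c + 0 *\<^sub>R (x - c)))"
      using D unfolding gderiv_def by simp
    ultimately have "(g has_derivative (\<lambda>t. (t *\<^sub>R (x - c)) \<bullet> D)) (at 0)"
      unfolding g_def by (rule has_derivative_compose)
    then show ?thesis
      unfolding has_field_derivative_def by (simp add: mult.commute[of _ "(x - c) \<bullet> D"])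
  qed
  ultimately have "g 1 - g 0 \<ge> (x - c) \<bullet> D * (1 - 0)"
    by (intro convex_on_imp_above_tangent) auto
  then show ?thesis by (simp add: g_def)
qed

lemma convex_stale_gradient_le:
  fixes f :: "'a::euclidean_space \<Rightarrow> real"
  assumes convex: "convex_on UNIV f" and differentiable: "\<And>z. f differentiable at z"
    and smooth: "\<And>a b. norm (grad f a - grad f b) \<le> H * norm (a - b)"
  shows "f y - f xs \<le> grad f x \<bullet> (y - xs) + H * (norm (x - y))\<^sup>2"
proof -
  note tangent = convex_on_above_gderiv_tangent[OF convex has_gderiv_grad[OF differentiable]]
  have "(x - y) \<bullet> (grad f x - grad f y) \<le> norm (x - y) * norm (grad f x - grad f y)"
    by (rule norm_cauchy_schwarz)
  also have "\<dots> \<le> norm (x - y) * (H * norm (x - y))"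
    using smooth by (intro mult_left_mono) auto
  finally have "(x - y) \<bullet> (grad f x - grad f y) \<le> H * (norm (x - y))\<^sup>2"
    by (simp add: power2_eq_square mult_ac)
  moreover have "f y - f xs \<le> grad f x \<bullet> (y - xs) + (x - y) \<bullet> (grad f x - grad f y)"
    using tangent[of x xs] tangent[of y x]
    by (simp add: inner_diff_left inner_diff_right inner_commute)
  ultimately show ?thesis
    by linarith
qed

lemma convex_abs_diff_le:
  fixes f :: "'a::euclidean_space \<Rightarrow> real"
  assumes convex: "convex_on UNIV f" and differentiable: "\<And>z. f differentiable at z"
    and "norm (grad f x) \<le> L" "norm (grad f y) \<le> L"
  shows "\<bar>f x - f y\<bar> \<le> L * norm (x - y)"
proof -
  note tangent = convex_on_above_gderiv_tangent[OF convex has_gderiv_grad[OF differentiable]]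
  have "(y - x) \<bullet> grad f y = - ((x - y) \<bullet> grad f y)" "(x - y) \<bullet> grad f x = - ((y - x) \<bullet> grad f x)"
    by (simp_all add: inner_diff_left)
  then have "f y - f x \<le> norm (y - x) * norm (grad f y)" "f x - f y \<le> norm (x - y) * norm (grad f x)"
    using tangent[of y x] norm_cauchy_schwarz[of "y - x" "grad f y"]
      tangent[of x y] norm_cauchy_schwarz[of "x - y" "grad f x"]
    by linarith+
  then show ?thesis
    using assms(3,4) mult_left_mono[OF assms(3), of "norm (x - y)"]
      mult_left_mono[OF assms(4), of "norm (x - y)"]
    by (simp add: norm_minus_commute mult.commute abs_le_iff)
qed

lemma convex_abs_diff_zero_le:
  fixes f :: "'a::euclidean_space \<Rightarrow> real"
  assumes "convex_on UNIV f" "\<And>z. f differentiable at z"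
    and grad_bound: "\<forall>z\<in>X. norm (grad f z) \<le> L"
    and diam: "\<forall>a\<in>X. \<forall>b\<in>X. (1/2) * (norm (a - b))\<^sup>2 \<le> F\<^sup>2" and "0 \<in> X" "y \<in> X" "F \<ge> 0"
  shows "\<bar>f y - f 0\<bar> \<le> L * (sqrt 2 * F)"
proof -
  have "(norm y)\<^sup>2 \<le> 2 * F\<^sup>2"
    using diam \<open>0 \<in> X\<close> \<open>y \<in> X\<close> by fastforce
  then have "norm y \<le> sqrt (2 * F\<^sup>2)"
    by (simp add: real_le_rsqrt)
  then have "norm y \<le> sqrt 2 * F"
    using \<open>F \<ge> 0\<close> by (simp add: real_sqrt_mult)
  moreover have "L \<ge> 0"
    using grad_bound \<open>0 \<in> X\<close> norm_ge_zero order_trans by blast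
  moreover have "\<bar>f y - f 0\<bar> \<le> L * norm (y - 0)"
    using assms by (intro convex_abs_diff_le) auto
  ultimately show ?thesis
    by (smt (verit) mult_left_mono diff_zero)
qed

section \<open>Projected online gradient descent\<close>

lemma projected_gradient_step_le:
  fixes X :: "'a::euclidean_space set"
  assumes X: "closed X" "convex X" "X \<noteq> {}" and "xs \<in> X" and "\<eta> > 0"
  shows "g \<bullet> (y - xs)
    \<le> ((norm (y - xs))\<^sup>2 - (norm (closest_point X (y - \<eta> *\<^sub>R g) - xs))\<^sup>2) / (2 * \<eta>)
      + \<eta> * (norm g)\<^sup>2 / 2"
proof -
  have "norm (closest_point X (y - \<eta> *\<^sub>R g) - xs) \<le> norm ((y - xs) - \<eta> *\<^sub>R g)"
    using closest_point_lipschitz[OF X(2,1,3), of "y - \<eta> *\<^sub>R g" xs]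
      closest_point_self[OF \<open>xs \<in> X\<close>]
    by (simp add: dist_norm algebra_simps)
  then have "(norm (closest_point X (y - \<eta> *\<^sub>R g) - xs))\<^sup>2 \<le> (norm ((y - xs) - \<eta> *\<^sub>R g))\<^sup>2"
    by (simp add: power_mono)
  also have "\<dots> = (norm (y - xs))\<^sup>2 - 2 * \<eta> * (g \<bullet> (y - xs)) + \<eta>\<^sup>2 * (norm g)\<^sup>2"
    unfolding power2_norm_eq_inner
    by (simp add: inner_diff_left inner_diff_right inner_commute algebra_simps power2_eq_square)
  finally show ?thesis
    using \<open>\<eta> > 0\<close> by (simp add: field_simps power2_eq_square)
qed

lemma sqrt_add_half_inverse_sqrt_le:
  "sqrt (real n) + 1 / (2 * sqrt (real (Suc n))) \<le> sqrt (real (Suc n))"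
proof -
  have "sqrt (real n) * sqrt (real (Suc n)) = sqrt (real n * (real n + 1))"
    by (simp add: real_sqrt_mult)
  also have "\<dots> \<le> sqrt ((real n + 1/2)\<^sup>2)"
    by (rule real_sqrt_le_mono) (simp add: power2_eq_square algebra_simps)
  finally have "sqrt (real n) * sqrt (real (Suc n)) \<le> real n + 1/2"
    by simp
  moreover have "sqrt (real (Suc n)) * sqrt (real (Suc n)) = real n + 1"
    by simp
  ultimately show ?thesis
    by (simp add: field_simps)
qed

lemma projected_ogd_potential_le:
  fixes X :: "'a::euclidean_space set" and y g :: "nat \<Rightarrow> 'a"
  assumes X: "closed X" "convex X" "X \<noteq> {}" and "xs \<in> X" and "\<sigma> > 0"
    and diam: "\<And>a b. a \<in> X \<Longrightarrow> b \<in> X \<Longrightarrow> (norm (a - b))\<^sup>2 \<le> D"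
    and y_in: "\<And>t. 1 \<le> t \<Longrightarrow> y t \<in> X"
    and y_Suc: "\<And>t. 1 \<le> t \<Longrightarrow> y (Suc t) = closest_point X (y t - (\<sigma> / sqrt (real t)) *\<^sub>R g t)"
    and g_bound: "\<And>t. 1 \<le> t \<Longrightarrow> t \<le> T \<Longrightarrow> norm (g t) \<le> L"
  shows "(\<Sum>t = 1..T. g t \<bullet> (y t - xs))
    \<le> (D - (norm (y (Suc T) - xs))\<^sup>2) * sqrt (real T) / (2 * \<sigma>) + \<sigma> * L\<^sup>2 * sqrt (real T)"
  using g_bound
proof (induction T)
  case (Suc n)
  define d where "d t = (norm (y t - xs))\<^sup>2" for t
  define \<eta> where "\<eta> = \<sigma> / sqrt (real (Suc n))"
  have "\<eta> > 0"
    using \<open>\<sigma> > 0\<close> by (simp add: \<eta>_def)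
  have "(norm (g (Suc n)))\<^sup>2 \<le> L\<^sup>2"
    using Suc.prems[of "Suc n"] by (simp add: power_mono)
  then have "\<eta> * (norm (g (Suc n)))\<^sup>2 / 2 \<le> \<eta> * L\<^sup>2 / 2"
    using \<open>\<eta> > 0\<close> by simp
  then have "g (Suc n) \<bullet> (y (Suc n) - xs) \<le> (d (Suc n) - d (Suc (Suc n))) / (2 * \<eta>) + \<eta> * L\<^sup>2 / 2"
    using projected_gradient_step_le[OF X \<open>xs \<in> X\<close> \<open>\<eta> > 0\<close>, of "g (Suc n)" "y (Suc n)"]
      y_Suc[of "Suc n"]
    by (simp add: d_def \<eta>_def)
  also have "\<dots> = (d (Suc n) - d (Suc (Suc n))) * sqrt (real (Suc n)) / (2 * \<sigma>)
        + \<sigma> * L\<^sup>2 * (1 / (2 * sqrt (real (Suc n))))"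
    using \<open>\<sigma> > 0\<close> by (simp add: \<eta>_def)
  finally have step: "g (Suc n) \<bullet> (y (Suc n) - xs) \<le> \<dots>" .
  have "d (Suc n) \<le> D"
    using diam y_in \<open>xs \<in> X\<close> by (simp add: d_def)
  then have "(D - d (Suc n)) * sqrt (real n) \<le> (D - d (Suc n)) * sqrt (real (Suc n))"
    by (intro mult_left_mono) auto
  then have potential: "(D - d (Suc n)) * sqrt (real n) + (d (Suc n) - d (Suc (Suc n))) * sqrt (real (Suc n))
      \<le> (D - d (Suc (Suc n))) * sqrt (real (Suc n))"
    by (simp add: algebra_simps)
  have "(\<Sum>t = 1..Suc n. g t \<bullet> (y t - xs)) = (\<Sum>t = 1..n. g t \<bullet> (y t - xs)) + g (Suc n) \<bullet> (y (Suc n) - xs)"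
    by simp
  also have "\<dots> \<le> ((D - d (Suc n)) * sqrt (real n) + (d (Suc n) - d (Suc (Suc n))) * sqrt (real (Suc n))) / (2 * \<sigma>)
      + \<sigma> * L\<^sup>2 * (sqrt (real n) + 1 / (2 * sqrt (real (Suc n))))"
    using Suc step by (simp add: d_def add_divide_distrib distrib_left)
  also have "\<dots> \<le> (D - d (Suc (Suc n))) * sqrt (real (Suc n)) / (2 * \<sigma>) + \<sigma> * L\<^sup>2 * sqrt (real (Suc n))"
    using potential sqrt_add_half_inverse_sqrt_le[of n] \<open>\<sigma> > 0\<close>
    by (intro add_mono divide_right_mono mult_left_mono) auto
  finally show ?case
    by (simp add: d_def)
qed simp

section \<open>Harmonic and telescoping sums\<close>

lemma sum_shifted_inverse_eq_harm:
  assumes "k \<le> \<tau>"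
  shows "(\<Sum>t = 1..T. if t + k \<le> \<tau> then 0 else 1 / real (t + k - \<tau>)) = (harm (T + k - \<tau>) :: real)"
proof (induction T)
  case (Suc T)
  show ?case
  proof (cases "Suc T + k \<le> \<tau>")
    case False
    then have "Suc T + k - \<tau> = Suc (T + k - \<tau>)"
      by auto
    then show ?thesis
      using Suc False by (simp add: harm_Suc divide_inverse)
  qed (use Suc in simp)
qed (use assms in \<open>simp add: harm_def\<close>)

lemma harm_pred_le_one_plus_ln: "harm (n - 1) \<le> 1 + ln (real n)"
proof (cases n)
  case (Suc m)
  have "harm (Suc m) - ln (real (Suc m)) \<le> harm (Suc 0) - ln (real (Suc 0))"
    using decseq_harm_diff_ln unfolding decseq_def by blast
  then have "harm (Suc m) \<le> 1 + ln (real (Suc m))"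
    by (simp add: harm_def)
  moreover have "harm m \<le> (harm (Suc m) :: real)"
    by (rule harm_mono) simp
  ultimately show ?thesis
    using Suc by simp
qed (simp add: harm_def)

lemma norm_diff_le_sum_increments:
  fixes x :: "nat \<Rightarrow> 'a::real_normed_vector"
  assumes "\<And>k. t \<le> k \<Longrightarrow> k < t + j \<Longrightarrow> norm (x (Suc k) - x k) \<le> \<delta> k"
  shows "norm (x t - x (t + j)) \<le> (\<Sum>k<j. \<delta> (t + k))"
  using assms
proof (induction j)
  case (Suc j)
  have "norm (x t - x (t + Suc j)) \<le> norm (x t - x (t + j)) + norm (x (Suc (t + j)) - x (t + j))"
    using norm_triangle_ineq[of "x t - x (t + j)" "x (t + j) - x (Suc (t + j))"]
    by (simp add: norm_minus_commute)
  also have "\<dots> \<le> (\<Sum>k<j. \<delta> (t + k)) + \<delta> (t + j)"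
    using Suc by (intro add_mono) auto
  finally show ?case
    by simp
qed simp

text \<open>Cauchy-Schwarz over the \<open>\<tau>\<close> steps between \<open>x t\<close> and \<open>x (t + \<tau>)\<close>, then summation
  over \<open>t\<close>, leaves \<open>\<tau>\<close> harmonic sums.\<close>

lemma sum_delayed_drift_squared_le:
  fixes x :: "nat \<Rightarrow> 'a::real_normed_vector"
  assumes step: "\<And>k. k < T + \<tau> \<Longrightarrow>
    norm (x (Suc k) - x k) \<le> (if k \<le> \<tau> then 0 else c / sqrt (real (k - \<tau>)))"
  shows "(\<Sum>t = 1..T. (norm (x t - x (t + \<tau>)))\<^sup>2) \<le> (real \<tau>)\<^sup>2 * c\<^sup>2 * (1 + ln (real T))"
proof -
  define \<delta> where "\<delta> k = (if k \<le> \<tau> then 0 else c / sqrt (real (k - \<tau>)))" for k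
  define e where "e k = (if k \<le> \<tau> then 0 else 1 / real (k - \<tau>))" for k
  have "(\<delta> k)\<^sup>2 = c\<^sup>2 * e k" for k
    by (simp add: \<delta>_def e_def power_divide)
  have drift: "(norm (x t - x (t + \<tau>)))\<^sup>2 \<le> real \<tau> * c\<^sup>2 * (\<Sum>k<\<tau>. e (t + k))"
    if "t \<in> {1..T}" for t
  proof -
    have "norm (x t - x (t + \<tau>)) \<le> (\<Sum>k<\<tau>. \<delta> (t + k))"
      using that step unfolding \<delta>_def by (intro norm_diff_le_sum_increments) auto
    then have "(norm (x t - x (t + \<tau>)))\<^sup>2 \<le> (\<Sum>k<\<tau>. \<delta> (t + k))\<^sup>2"
      by (simp add: power_mono)
    also have "\<dots> \<le> (\<Sum>k<\<tau>. (\<delta> (t + k))\<^sup>2) * card {..<\<tau>}"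
      by (rule sum_squared_le_sum_of_squares)
    also have "\<dots> = real \<tau> * c\<^sup>2 * (\<Sum>k<\<tau>. e (t + k))"
      by (simp add: \<open>\<And>k. (\<delta> k)\<^sup>2 = c\<^sup>2 * e k\<close> sum_distrib_left sum_distrib_right mult_ac)
    finally show ?thesis .
  qed
  have harmonic: "(\<Sum>t = 1..T. e (t + k)) \<le> harm (T - 1)" if "k < \<tau>" for k
  proof -
    have "(\<Sum>t = 1..T. e (t + k)) = harm (T + k - \<tau>)"
      unfolding e_def using sum_shifted_inverse_eq_harm[of k \<tau> T] that by simp
    also have "\<dots> \<le> harm (T - 1)"
      using that by (intro harm_mono) auto
    finally show ?thesis .
  qed
  have "(\<Sum>t = 1..T. (norm (x t - x (t + \<tau>)))\<^sup>2) \<le> (\<Sum>t = 1..T. real \<tau> * c\<^sup>2 * (\<Sum>k<\<tau>. e (t + k)))"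
    using drift by (rule sum_mono)
  also have "\<dots> = real \<tau> * c\<^sup>2 * (\<Sum>k<\<tau>. \<Sum>t = 1..T. e (t + k))"
    by (simp add: sum_distrib_left) (rule sum.swap)
  also have "\<dots> \<le> real \<tau> * c\<^sup>2 * (\<Sum>k<\<tau>. harm (T - 1))"
    using harmonic by (intro mult_left_mono sum_mono) auto
  also have "\<dots> = (real \<tau>)\<^sup>2 * c\<^sup>2 * harm (T - 1)"
    by (simp add: power2_eq_square)
  also have "\<dots> \<le> (real \<tau>)\<^sup>2 * c\<^sup>2 * (1 + ln (real T))"
    by (intro mult_left_mono harm_pred_le_one_plus_ln) simp
  finally show ?thesis .
qed

lemma sum_diff_shift_telescope:
  fixes a :: "nat \<Rightarrow> 'a::ab_group_add"
  shows "(\<Sum>t = 1..T. a t - a (t + \<tau>)) = (\<Sum>k<\<tau>. a (1 + k) - a (T + 1 + k))"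
proof (induction T)
  case (Suc T)
  have "(\<Sum>k<\<tau>. a (T + 1 + k) - a (T + 2 + k)) = a (T + 1) - a (T + 1 + \<tau>)"
    using sum_lessThan_telescope'[of "\<lambda>k. a (T + 1 + k)" \<tau>] by simp
  moreover have "(\<Sum>k<\<tau>. a (1 + k) - a (Suc T + 1 + k))
      = (\<Sum>k<\<tau>. a (1 + k) - a (T + 1 + k)) + (\<Sum>k<\<tau>. a (T + 1 + k) - a (T + 2 + k))"
    by (simp add: sum.distrib[symmetric])
  ultimately show ?case
    using Suc by simp
qed simp

section \<open>Pathwise regret of delayed gradient descent\<close>

lemma dsgd_initial: "k \<le> \<tau> \<Longrightarrow> dsgd X \<tau> \<sigma> f k = 0"
  by (cases k) auto

lemma dsgd_in_set:
  assumes "closed X" "X \<noteq> {}" "0 \<in> X"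
  shows "dsgd X \<tau> \<sigma> fs k \<in> X"
  using assms by (cases k) (auto simp: closest_point_in_set)

lemma dsgd_cong:
  assumes "\<And>i. 1 \<le> i \<Longrightarrow> i < k - \<tau> \<Longrightarrow> fs i = fs' i"
  shows "dsgd X \<tau> \<sigma> fs k = dsgd X \<tau> \<sigma> fs' k"
  using assms
proof (induction k rule: less_induct)
  case (less k)
  show ?case
  proof (cases k)
    case (Suc m)
    show ?thesis
    proof (cases "m \<le> \<tau>")
      case False
      have "dsgd X \<tau> \<sigma> fs m = dsgd X \<tau> \<sigma> fs' m"
        "dsgd X \<tau> \<sigma> fs (m - \<tau>) = dsgd X \<tau> \<sigma> fs' (m - \<tau>)"
        "fs (m - \<tau>) = fs' (m - \<tau>)"
        using less.IH[of m] less.IH[of "m - \<tau>"] less.prems Suc False by auto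
      then show ?thesis using Suc False by simp
    qed (use Suc in simp)
  qed simp
qed

lemma norm_dsgd_Suc_diff_le:
  assumes X: "closed X" "convex X" "X \<noteq> {}" "0 \<in> X" and "\<tau> < k" "\<sigma> \<ge> 0"
  shows "norm (dsgd X \<tau> \<sigma> f (Suc k) - dsgd X \<tau> \<sigma> f k)
    \<le> \<sigma> / sqrt (real (k - \<tau>)) * norm (grad (f (k - \<tau>)) (dsgd X \<tau> \<sigma> f (k - \<tau>)))"
proof -
  let ?x = "dsgd X \<tau> \<sigma> f" and ?\<eta> = "\<sigma> / sqrt (real (k - \<tau>))"
  have "?x k \<in> X"
    using X by (intro dsgd_in_set)
  then have "norm (?x (Suc k) - ?x k)
      = dist (closest_point X (?x k - ?\<eta> *\<^sub>R grad (f (k - \<tau>)) (?x (k - \<tau>)))) (closest_point X (?x k))"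
    using \<open>\<tau> < k\<close> by (simp add: closest_point_self dist_norm)
  also have "\<dots> \<le> dist (?x k - ?\<eta> *\<^sub>R grad (f (k - \<tau>)) (?x (k - \<tau>))) (?x k)"
    by (rule closest_point_lipschitz[OF X(2,1,3)])
  finally show ?thesis
    using \<open>\<sigma> \<ge> 0\<close> by (simp add: dist_norm)
qed

lemma sum_dsgd_delayed_drift_squared_le:
  fixes X :: "'a::euclidean_space set"
  assumes X: "closed X" "convex X" "X \<noteq> {}" "0 \<in> X" and "\<sigma> \<ge> 0"
    and grad_bound: "\<And>t. 1 \<le> t \<Longrightarrow> t \<le> T \<Longrightarrow> \<forall>y\<in>X. norm (grad (f t) y) \<le> L"
  shows "(\<Sum>t = 1..T. (norm (dsgd X \<tau> \<sigma> f t - dsgd X \<tau> \<sigma> f (t + \<tau>)))\<^sup>2)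
    \<le> (real \<tau>)\<^sup>2 * (\<sigma> * L)\<^sup>2 * (1 + ln (real T))"
proof (rule sum_delayed_drift_squared_le)
  fix k assume "k < T + \<tau>"
  show "norm (dsgd X \<tau> \<sigma> f (Suc k) - dsgd X \<tau> \<sigma> f k)
    \<le> (if k \<le> \<tau> then 0 else \<sigma> * L / sqrt (real (k - \<tau>)))"
  proof (cases "k \<le> \<tau>")
    case False
    have "norm (grad (f (k - \<tau>)) (dsgd X \<tau> \<sigma> f (k - \<tau>))) \<le> L"
      using False \<open>k < T + \<tau>\<close> grad_bound[of "k - \<tau>"] dsgd_in_set[of X] X by auto
    then have "\<sigma> / sqrt (real (k - \<tau>)) * norm (grad (f (k - \<tau>)) (dsgd X \<tau> \<sigma> f (k - \<tau>)))
        \<le> \<sigma> * L / sqrt (real (k - \<tau>))"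
      using \<open>\<sigma> \<ge> 0\<close> by (simp add: divide_right_mono mult_left_mono)
    then show ?thesis
      using norm_dsgd_Suc_diff_le[OF X, of \<tau> k \<sigma> f] False \<open>\<sigma> \<ge> 0\<close> by simp
  qed (simp add: dsgd_initial)
qed

lemma dsgd_linearized_regret_le:
  fixes X :: "'a::euclidean_space set" and f :: "nat \<Rightarrow> 'a \<Rightarrow> real"
  assumes X: "closed X" "convex X" "X \<noteq> {}" "0 \<in> X" and "xs \<in> X" and "F > 0" "L > 0"
    and diam: "\<forall>a\<in>X. \<forall>b\<in>X. (1/2) * (norm (a - b))\<^sup>2 \<le> F\<^sup>2"
    and grad_bound: "\<And>t. 1 \<le> t \<Longrightarrow> t \<le> T \<Longrightarrow> \<forall>y\<in>X. norm (grad (f t) y) \<le> L"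
  shows "(\<Sum>t = 1..T. grad (f t) (dsgd X \<tau> (F / L) f t) \<bullet> (dsgd X \<tau> (F / L) f (t + \<tau>) - xs))
    \<le> 2 * F * L * sqrt (real T)"
proof -
  define x where "x = dsgd X \<tau> (F / L) f"
  define g where "g t = grad (f t) (x t)" for t
  have x_in: "x k \<in> X" for k
    unfolding x_def by (rule dsgd_in_set[OF X(1,3,4)])
  have "(\<Sum>t = 1..T. g t \<bullet> (x (t + \<tau>) - xs))
      \<le> (2 * F\<^sup>2 - (norm (x (Suc T + \<tau>) - xs))\<^sup>2) * sqrt (real T) / (2 * (F / L))
        + F / L * L\<^sup>2 * sqrt (real T)"
  proof (rule projected_ogd_potential_le[OF X(1-3) \<open>xs \<in> X\<close>])
    show "(norm (a - b))\<^sup>2 \<le> 2 * F\<^sup>2" if "a \<in> X" "b \<in> X" for a b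
      using diam that by fastforce
    show "x (Suc t + \<tau>) = closest_point X (x (t + \<tau>) - (F / L / sqrt (real t)) *\<^sub>R g t)"
      if "1 \<le> t" for t
      using that by (simp add: x_def g_def)
    show "norm (g t) \<le> L" if "1 \<le> t" "t \<le> T" for t
      using grad_bound that x_in by (auto simp: g_def)
  qed (use \<open>F > 0\<close> \<open>L > 0\<close> x_in in auto)
  also have "\<dots> \<le> 2 * F * L * sqrt (real T)"
    using \<open>F > 0\<close> \<open>L > 0\<close> by (simp add: field_simps power2_eq_square)
  finally show ?thesis
    by (simp add: x_def g_def)
qed

lemma dsgd_delayed_regret_le:
  fixes X :: "'a::euclidean_space set" and f :: "nat \<Rightarrow> 'a \<Rightarrow> real"
  assumes X: "closed X" "convex X" "X \<noteq> {}" "0 \<in> X" and "xs \<in> X"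
    and "F > 0" "L > 0" "H \<ge> 0"
    and diam: "\<forall>a\<in>X. \<forall>b\<in>X. (1/2) * (norm (a - b))\<^sup>2 \<le> F\<^sup>2"
    and convex: "\<And>t. 1 \<le> t \<Longrightarrow> t \<le> T \<Longrightarrow> convex_on UNIV (f t)"
    and differentiable: "\<And>t z. 1 \<le> t \<Longrightarrow> t \<le> T \<Longrightarrow> f t differentiable at z"
    and grad_bound: "\<And>t. 1 \<le> t \<Longrightarrow> t \<le> T \<Longrightarrow> \<forall>y\<in>X. norm (grad (f t) y) \<le> L"
    and smooth: "\<And>t a b. 1 \<le> t \<Longrightarrow> t \<le> T \<Longrightarrow> norm (grad (f t) a - grad (f t) b) \<le> H * norm (a - b)"
  shows "(\<Sum>t = 1..T. f t (dsgd X \<tau> (F / L) f (t + \<tau>)) - f t xs)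
    \<le> 2 * F * L * sqrt (real T) + H * ((real \<tau>)\<^sup>2 * F\<^sup>2 * (1 + ln (real T)))"
proof -
  define x where "x = dsgd X \<tau> (F / L) f"
  have "(\<Sum>t = 1..T. (norm (x t - x (t + \<tau>)))\<^sup>2) \<le> (real \<tau>)\<^sup>2 * (F / L * L)\<^sup>2 * (1 + ln (real T))"
    unfolding x_def using \<open>F > 0\<close> \<open>L > 0\<close> grad_bound
    by (intro sum_dsgd_delayed_drift_squared_le[OF X]) auto
  then have drift: "H * (\<Sum>t = 1..T. (norm (x t - x (t + \<tau>)))\<^sup>2) \<le> H * ((real \<tau>)\<^sup>2 * F\<^sup>2 * (1 + ln (real T)))"
    using \<open>L > 0\<close> \<open>H \<ge> 0\<close> by (simp add: mult_left_mono)
  have "(\<Sum>t = 1..T. f t (x (t + \<tau>)) - f t xs)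
      \<le> (\<Sum>t = 1..T. grad (f t) (x t) \<bullet> (x (t + \<tau>) - xs) + H * (norm (x t - x (t + \<tau>)))\<^sup>2)"
    using convex differentiable smooth by (intro sum_mono convex_stale_gradient_le) auto
  also have "\<dots> = (\<Sum>t = 1..T. grad (f t) (x t) \<bullet> (x (t + \<tau>) - xs))
      + H * (\<Sum>t = 1..T. (norm (x t - x (t + \<tau>)))\<^sup>2)"
    by (simp add: sum.distrib sum_distrib_left)
  moreover have "(\<Sum>t = 1..T. grad (f t) (x t) \<bullet> (x (t + \<tau>) - xs)) \<le> 2 * F * L * sqrt (real T)"
    unfolding x_def using grad_bound
    by (intro dsgd_linearized_regret_le[OF X \<open>xs \<in> X\<close> \<open>F > 0\<close> \<open>L > 0\<close> diam]) auto
  ultimately show ?thesis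
    using drift by (simp add: x_def)
qed

lemma dsgd_regret_decomposition_le:
  fixes X :: "'a::euclidean_space set" and f :: "nat \<Rightarrow> 'a \<Rightarrow> real"
  assumes X: "closed X" "convex X" "X \<noteq> {}" "0 \<in> X" and "xs \<in> X"
    and "F > 0" "L > 0" "H \<ge> 0"
    and diam: "\<forall>a\<in>X. \<forall>b\<in>X. (1/2) * (norm (a - b))\<^sup>2 \<le> F\<^sup>2"
    and convex: "\<And>t. 1 \<le> t \<Longrightarrow> t \<le> T + \<tau> \<Longrightarrow> convex_on UNIV (f t)"
    and differentiable: "\<And>t z. 1 \<le> t \<Longrightarrow> t \<le> T + \<tau> \<Longrightarrow> f t differentiable at z"
    and grad_bound: "\<And>t. 1 \<le> t \<Longrightarrow> t \<le> T + \<tau> \<Longrightarrow> \<forall>y\<in>X. norm (grad (f t) y) \<le> L"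
    and smooth: "\<And>t a b. 1 \<le> t \<Longrightarrow> t \<le> T \<Longrightarrow> norm (grad (f t) a - grad (f t) b) \<le> H * norm (a - b)"
  shows "(\<Sum>t = 1..T. f t (dsgd X \<tau> (F / L) f t) - f t xs)
    \<le> 2 * F * L * sqrt (real T) + H * ((real \<tau>)\<^sup>2 * F\<^sup>2 * (1 + ln (real T))) + real \<tau> * (L * (sqrt 2 * F))
      + (\<Sum>t = 1..T. f (t + \<tau>) (dsgd X \<tau> (F / L) f (t + \<tau>)) - f t (dsgd X \<tau> (F / L) f (t + \<tau>)))
      + (\<Sum>k<\<tau>. f (1 + k) 0 - f (T + 1 + k) 0)"
proof -
  define x where "x = dsgd X \<tau> (F / L) f"
  have x_in: "x k \<in> X" for k
    unfolding x_def by (rule dsgd_in_set[OF X(1,3,4)])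
  have "\<bar>f (T + 1 + k) (x (T + 1 + k)) - f (T + 1 + k) 0\<bar> \<le> L * (sqrt 2 * F)" if "k < \<tau>" for k
    using convex differentiable grad_bound x_in that \<open>0 \<in> X\<close> \<open>F > 0\<close>
    by (intro convex_abs_diff_zero_le[OF _ _ _ diam]) auto
  then have boundary: "(\<Sum>k<\<tau>. f (T + 1 + k) 0 - f (T + 1 + k) (x (T + 1 + k))) \<le> real \<tau> * (L * (sqrt 2 * F))"
    using sum_mono[of "{..<\<tau>}" "\<lambda>k. f (T + 1 + k) 0 - f (T + 1 + k) (x (T + 1 + k))"
        "\<lambda>_. L * (sqrt 2 * F)"] by (simp add: abs_le_iff)
  have "(\<Sum>t = 1..T. f t (x t) - f (t + \<tau>) (x (t + \<tau>)))
      = (\<Sum>k<\<tau>. f (1 + k) (x (1 + k)) - f (T + 1 + k) (x (T + 1 + k)))"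
    by (rule sum_diff_shift_telescope)
  also have "\<dots> = (\<Sum>k<\<tau>. f (1 + k) 0 - f (T + 1 + k) 0)
      + (\<Sum>k<\<tau>. f (T + 1 + k) 0 - f (T + 1 + k) (x (T + 1 + k)))"
    by (simp add: x_def dsgd_initial sum.distrib[symmetric])
  finally have telescope: "(\<Sum>t = 1..T. f t (x t) - f (t + \<tau>) (x (t + \<tau>))) = \<dots>" .
  have "(\<Sum>t = 1..T. f t (x t) - f t xs)
      = (\<Sum>t = 1..T. f t (x (t + \<tau>)) - f t xs) + (\<Sum>t = 1..T. f t (x t) - f (t + \<tau>) (x (t + \<tau>)))
        + (\<Sum>t = 1..T. f (t + \<tau>) (x (t + \<tau>)) - f t (x (t + \<tau>)))"
    by (simp add: sum.distrib[symmetric])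
  then show ?thesis
    using dsgd_delayed_regret_le[OF X \<open>xs \<in> X\<close> \<open>F > 0\<close> \<open>L > 0\<close> \<open>H \<ge> 0\<close> diam, of T f \<tau>]
      convex differentiable grad_bound smooth telescope boundary
    unfolding x_def by fastforce
qed

section \<open>Measurability of the iterates\<close>

lemma gderiv_difference_quotient_tendsto:
  fixes f :: "'a::real_inner \<Rightarrow> real"
  assumes D: "GDERIV f x :> D"
  shows "(\<lambda>n. (f (x + (1 / real (Suc n)) *\<^sub>R b) - f x) / (1 / real (Suc n))) \<longlonglongrightarrow> b \<bullet> D"
proof -
  define g where "g t = f (x + t *\<^sub>R b)" for t
  have "((\<lambda>t. x + t *\<^sub>R b) has_derivative (\<lambda>t. t *\<^sub>R b)) (at 0)"
    by (auto intro!: derivative_eq_intros)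
  moreover have "(f has_derivative (\<lambda>h. h \<bullet> D)) (at (x + 0 *\<^sub>R b))"
    using D unfolding gderiv_def by simp
  ultimately have "(g has_derivative (\<lambda>t. (t *\<^sub>R b) \<bullet> D)) (at 0)"
    unfolding g_def by (rule has_derivative_compose)
  then have "(g has_field_derivative b \<bullet> D) (at 0)"
    unfolding has_field_derivative_def by (simp add: mult.commute[of _ "b \<bullet> D"])
  then have "((\<lambda>t. (g t - g 0) / (t - 0)) \<longlongrightarrow> b \<bullet> D) (at 0)"
    by (simp add: has_field_derivative_iff)
  moreover have "filterlim (\<lambda>n. 1 / real (Suc n)) (at 0) sequentially"
    unfolding filterlim_at
    by (auto intro!: LIMSEQ_Suc[OF lim_inverse_n'] simp del: of_nat_Suc)
  ultimately show ?thesis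
    using filterlim_compose by (force simp: g_def)
qed

lemma floor_mult_divide_tendsto:
  "(\<lambda>m. real_of_int \<lfloor>real (Suc m) * y\<rfloor> / real (Suc m)) \<longlonglongrightarrow> y"
proof (rule tendsto_sandwich[of "\<lambda>m. y - 1 / real (Suc m)" _ _ "\<lambda>m. y"])
  show "\<forall>\<^sub>F m in sequentially. y - 1 / real (Suc m) \<le> real_of_int \<lfloor>real (Suc m) * y\<rfloor> / real (Suc m)"
  proof (intro always_eventually allI)
    fix m
    have "real (Suc m) * y - 1 \<le> real_of_int \<lfloor>real (Suc m) * y\<rfloor>"
      by linarith
    then have "(real (Suc m) * y - 1) / real (Suc m) \<le> real_of_int \<lfloor>real (Suc m) * y\<rfloor> / real (Suc m)"
      by (rule divide_right_mono) simp
    then show "y - 1 / real (Suc m) \<le> real_of_int \<lfloor>real (Suc m) * y\<rfloor> / real (Suc m)"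
      by (simp add: diff_divide_distrib del: of_nat_Suc)
  qed
  show "\<forall>\<^sub>F m in sequentially. real_of_int \<lfloor>real (Suc m) * y\<rfloor> / real (Suc m) \<le> y"
    by (intro always_eventually allI) (simp add: field_simps del: of_nat_Suc)
  show "(\<lambda>m. y - 1 / real (Suc m)) \<longlonglongrightarrow> y"
    using tendsto_diff[OF tendsto_const LIMSEQ_Suc[OF lim_inverse_n']] by simp
qed simp

text \<open>Rounding the second argument down to the grid of mesh \<open>1 / Suc m\<close> selects one of
  countably many measurable sections; continuity recovers \<open>\<phi>\<close> in the limit.\<close>

lemma borel_measurable_caratheodory:
  fixes \<phi> :: "'s \<Rightarrow> 'a::euclidean_space \<Rightarrow> 'b::metric_space"
  assumes measurable: "\<And>x. (\<lambda>s. \<phi> s x) \<in> borel_measurable p"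
    and continuous: "\<And>s x. s \<in> space p \<Longrightarrow> isCont (\<phi> s) x"
  shows "(\<lambda>z. \<phi> (fst z) (snd z)) \<in> borel_measurable (p \<Otimes>\<^sub>M borel)"
proof (rule borel_measurable_LIMSEQ_metric)
  define cell where "cell m x = restrict (\<lambda>b. \<lfloor>real (Suc m) * (x \<bullet> b)\<rfloor>) Basis"
    for m and x :: 'a
  define grid where "grid m \<kappa> = (\<Sum>b\<in>Basis. (real_of_int (\<kappa> b) / real (Suc m)) *\<^sub>R b)"
    for m and \<kappa> :: "'a \<Rightarrow> int"
  define I :: "('a \<Rightarrow> int) set" where "I = Basis \<rightarrow>\<^sub>E UNIV"
  show "(\<lambda>z. \<phi> (fst z) (grid m (cell m (snd z)))) \<in> borel_measurable (p \<Otimes>\<^sub>M borel)" for m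
  proof (rule measurable_compose_countable'[where I=I and g="\<lambda>z. cell m (snd z)"
        and f="\<lambda>\<kappa> z. \<phi> (fst z) (grid m \<kappa>)"])
    show "(\<lambda>z. \<phi> (fst z) (grid m \<kappa>)) \<in> borel_measurable (p \<Otimes>\<^sub>M borel)" for \<kappa>
      using measurable by measurable
    show "countable I"
      unfolding I_def by (intro countable_PiE) auto
    show "(\<lambda>z. cell m (snd z)) \<in> measurable (p \<Otimes>\<^sub>M borel) (count_space I)"
    proof (rule measurable_count_space_eq_countable[THEN iffD2, OF \<open>countable I\<close>], safe)
      fix \<kappa> assume "\<kappa> \<in> I"
      then have "(\<lambda>z. cell m (snd z)) -` {\<kappa>} \<inter> space (p \<Otimes>\<^sub>M borel)
          = {z \<in> space (p \<Otimes>\<^sub>M borel). \<forall>b\<in>Basis. \<lfloor>real (Suc m) * (snd z \<bullet> b)\<rfloor> = \<kappa> b}"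
        by (auto simp: cell_def I_def fun_eq_iff PiE_def extensional_def)
      also have "\<dots> \<in> sets (p \<Otimes>\<^sub>M borel)"
        by measurable
      finally show "(\<lambda>z. cell m (snd z)) -` {\<kappa>} \<inter> space (p \<Otimes>\<^sub>M borel) \<in> sets (p \<Otimes>\<^sub>M borel)" .
    qed (auto simp: cell_def I_def)
  qed
  fix z :: "'s \<times> 'a" assume z: "z \<in> space (p \<Otimes>\<^sub>M borel)"
  have "(\<lambda>m. grid m (cell m x)) \<longlonglongrightarrow> (\<Sum>b\<in>Basis. (x \<bullet> b) *\<^sub>R b)" for x
    unfolding grid_def cell_def
    by (intro tendsto_intros) (simp add: floor_mult_divide_tendsto del: of_nat_Suc)
  then have "(\<lambda>m. grid m (cell m (snd z))) \<longlonglongrightarrow> snd z"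
    by (simp add: euclidean_representation)
  moreover have "isCont (\<phi> (fst z)) (snd z)"
    using z continuous by (auto simp: space_pair_measure)
  ultimately show "(\<lambda>m. \<phi> (fst z) (grid m (cell m (snd z)))) \<longlonglongrightarrow> \<phi> (fst z) (snd z)"
    using isCont_tendsto_compose by blast
qed

lemma borel_measurable_grad:
  fixes \<phi> :: "'s \<Rightarrow> 'a::euclidean_space \<Rightarrow> real"
  assumes measurable: "\<And>x. (\<lambda>s. \<phi> s x) \<in> borel_measurable p"
    and differentiable: "\<And>s x. s \<in> space p \<Longrightarrow> \<phi> s differentiable at x"
  shows "(\<lambda>z. grad (\<phi> (fst z)) (snd z)) \<in> borel_measurable (p \<Otimes>\<^sub>M borel)"
proof -
  have \<Phi>: "(\<lambda>z. \<phi> (fst z) (snd z)) \<in> borel_measurable (p \<Otimes>\<^sub>M borel)"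
    using measurable differentiable
    by (intro borel_measurable_caratheodory differentiable_imp_continuous_within)
  have "(\<lambda>z. \<phi> (fst z) (snd z + c)) \<in> borel_measurable (p \<Otimes>\<^sub>M borel)" for c
  proof -
    have "(\<lambda>z. (fst z, snd z + c)) \<in> measurable (p \<Otimes>\<^sub>M borel) (p \<Otimes>\<^sub>M borel)"
      by measurable
    from measurable_compose[OF this \<Phi>] show ?thesis by simp
  qed
  note [measurable] = this \<Phi>
  show ?thesis
  proof (rule borel_measurable_euclidean_space[THEN iffD2], rule ballI)
    fix b :: 'a
    show "(\<lambda>z. grad (\<phi> (fst z)) (snd z) \<bullet> b) \<in> borel_measurable (p \<Otimes>\<^sub>M borel)"
    proof (rule borel_measurable_LIMSEQ_metric)
      show "(\<lambda>z. (\<phi> (fst z) (snd z + (1 / real (Suc n)) *\<^sub>R b) - \<phi> (fst z) (snd z)) / (1 / real (Suc n)))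
          \<in> borel_measurable (p \<Otimes>\<^sub>M borel)" for n
        by measurable
      fix z :: "'s \<times> 'a" assume "z \<in> space (p \<Otimes>\<^sub>M borel)"
      then have "GDERIV (\<phi> (fst z)) (snd z) :> grad (\<phi> (fst z)) (snd z)"
        using differentiable by (intro has_gderiv_grad) (auto simp: space_pair_measure)
      from gderiv_difference_quotient_tendsto[OF this, of b]
      show "(\<lambda>n. (\<phi> (fst z) (snd z + (1 / real (Suc n)) *\<^sub>R b) - \<phi> (fst z) (snd z)) / (1 / real (Suc n)))
          \<longlonglongrightarrow> grad (\<phi> (fst z)) (snd z) \<bullet> b"
        by (simp add: inner_commute)
    qed
  qed
qed

lemma dsgd_measurable:
  fixes X :: "'a::euclidean_space set" and \<phi> :: "'s \<Rightarrow> 'a \<Rightarrow> real"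
  assumes X: "closed X" "convex X" "X \<noteq> {}"
    and grad_measurable: "(\<lambda>z. grad (\<phi> (fst z)) (snd z)) \<in> borel_measurable (p \<Otimes>\<^sub>M borel)"
    and "{1..<k - \<tau>} \<subseteq> I"
  shows "(\<lambda>f. dsgd X \<tau> \<sigma> (\<lambda>i. \<phi> (f i)) k) \<in> borel_measurable (PiM I (\<lambda>_. p))"
  using \<open>{1..<k - \<tau>} \<subseteq> I\<close>
proof (induction k rule: less_induct)
  case (less k)
  show ?case
  proof (cases k)
    case (Suc m)
    show ?thesis
    proof (cases "m \<le> \<tau>")
      case False
      define x where "x f j = dsgd X \<tau> \<sigma> (\<lambda>i. \<phi> (f i)) j" for f j
      have "m - \<tau> \<in> {1..<k - \<tau>}" "{1..<m - \<tau>} \<subseteq> {1..<k - \<tau>}"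
        "{1..<m - \<tau> - \<tau>} \<subseteq> {1..<k - \<tau>}"
        using Suc False by auto
      then have "m - \<tau> \<in> I" "{1..<m - \<tau>} \<subseteq> I" "{1..<m - \<tau> - \<tau>} \<subseteq> I"
        using less.prems by blast+
      then have "(\<lambda>f. x f m) \<in> borel_measurable (PiM I (\<lambda>_. p))"
        "(\<lambda>f. (f (m - \<tau>), x f (m - \<tau>))) \<in> measurable (PiM I (\<lambda>_. p)) (p \<Otimes>\<^sub>M borel)"
        using less.IH[of m] less.IH[of "m - \<tau>"] Suc False unfolding x_def by auto
      note [measurable] = this(1) measurable_compose[OF this(2) grad_measurable, simplified]
      have "(\<lambda>f. x f m - (\<sigma> / sqrt (real (m - \<tau>))) *\<^sub>R grad (\<phi> (f (m - \<tau>))) (x f (m - \<tau>)))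
          \<in> borel_measurable (PiM I (\<lambda>_. p))"
        by measurable
      moreover have "closest_point X \<in> borel_measurable borel"
        using X by (intro borel_measurable_continuous_onI continuous_on_closest_point)
      ultimately show ?thesis
        using measurable_compose Suc False unfolding x_def by fastforce
    qed (use Suc in simp)
  qed simp
qed

section \<open>Expected regret under i.i.d. sampling\<close>

lemma (in prob_space) integral_le_of_AE_le_add_mean_zero:
  fixes R g :: "'a \<Rightarrow> real"
  assumes "AE \<omega> in M. R \<omega> \<le> B + g \<omega>" "integrable M g" "integral\<^sup>L M g = 0" "B \<ge> 0"
  shows "integral\<^sup>L M R \<le> B"
proof (cases "integrable M R")
  case True
  then have "integral\<^sup>L M R \<le> (\<integral>\<omega>. B + g \<omega> \<partial>M)"
    using assms by (intro integral_mono_AE) auto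
  then show ?thesis
    using assms by (simp add: prob_space)
qed (simp add: not_integrable_integral_eq \<open>B \<ge> 0\<close>)

locale delayed_sgd_sampling = prob_space M for M :: "'w measure" +
  fixes p :: "'s measure" and \<xi> :: "nat \<Rightarrow> 'w \<Rightarrow> 's"
    and \<phi> :: "'s \<Rightarrow> 'a::euclidean_space \<Rightarrow> real" and X :: "'a set"
  assumes indep_samples: "indep_vars (\<lambda>_. p) \<xi> {1..}"
    and distr_sample: "\<And>t. 1 \<le> t \<Longrightarrow> distr M p (\<xi> t) = p"
    and measurable_loss: "\<And>x. (\<lambda>s. \<phi> s x) \<in> borel_measurable p"
    and differentiable_loss: "\<And>s x. s \<in> space p \<Longrightarrow> \<phi> s differentiable at x"
    and closed_X: "closed X" and convex_X: "convex X" and nonempty_X: "X \<noteq> {}"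
begin

lemma measurable_sample: "1 \<le> t \<Longrightarrow> \<xi> t \<in> measurable M p"
  using indep_samples unfolding indep_vars_def by auto

lemma sample_in_space: "1 \<le> t \<Longrightarrow> \<omega> \<in> space M \<Longrightarrow> \<xi> t \<omega> \<in> space p"
  using measurable_sample by (rule measurable_space)

lemma AE_sample: "(AE s in p. P s) \<Longrightarrow> 1 \<le> t \<Longrightarrow> AE \<omega> in M. P (\<xi> t \<omega>)"
  using AE_distrD[OF measurable_sample] distr_sample by metis

lemma integrable_sample:
  fixes g :: "'s \<Rightarrow> real"
  assumes "integrable p g" "1 \<le> t"
  shows "integrable M (\<lambda>\<omega>. g (\<xi> t \<omega>))"
  using assms integrable_distr_eq[OF measurable_sample, of t g] distr_sample by simp

lemma integral_sample:
  fixes g :: "'s \<Rightarrow> real"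
  assumes "g \<in> borel_measurable p" "1 \<le> t"
  shows "(\<integral>\<omega>. g (\<xi> t \<omega>) \<partial>M) = (\<integral>s. g s \<partial>p)"
  using assms integral_distr[OF measurable_sample, of t g] distr_sample by simp

text \<open>Both components of \<open>indep_var\<close> must have the same type, so the later sample is
  stored as a function on \<open>{0}\<close>; this also makes its law independent of \<open>j\<close>.\<close>

lemma distr_past_and_sample:
  assumes "t \<le> j" "1 \<le> j"
  shows "distr M (PiM {1..<t} (\<lambda>_. p) \<Otimes>\<^sub>M PiM {0::nat} (\<lambda>_. p))
      (\<lambda>\<omega>. (restrict (\<lambda>i. \<xi> i \<omega>) {1..<t}, restrict (\<lambda>_. \<xi> j \<omega>) {0::nat}))
    = distr M (PiM {1..<t} (\<lambda>_. p)) (\<lambda>\<omega>. restrict (\<lambda>i. \<xi> i \<omega>) {1..<t})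
      \<Otimes>\<^sub>M distr p (PiM {0::nat} (\<lambda>_. p)) (\<lambda>s. restrict (\<lambda>_. s) {0::nat})"
proof -
  have "indep_var (PiM {1..<t} (\<lambda>_. p)) (\<lambda>\<omega>. restrict (\<lambda>i. \<xi> i \<omega>) {1..<t})
      (PiM {j} (\<lambda>_. p)) (\<lambda>\<omega>. restrict (\<lambda>i. \<xi> i \<omega>) {j})"
    using assms by (intro indep_var_restrict[OF indep_samples]) auto
  moreover have "(\<lambda>f. restrict (\<lambda>_. f j) {0::nat}) \<in> measurable (PiM {j} (\<lambda>_. p)) (PiM {0::nat} (\<lambda>_. p))"
    by measurable
  ultimately have "indep_var (PiM {1..<t} (\<lambda>_. p)) (id \<circ> (\<lambda>\<omega>. restrict (\<lambda>i. \<xi> i \<omega>) {1..<t}))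
      (PiM {0::nat} (\<lambda>_. p)) ((\<lambda>f. restrict (\<lambda>_. f j) {0::nat}) \<circ> (\<lambda>\<omega>. restrict (\<lambda>i. \<xi> i \<omega>) {j}))"
    by (rule indep_var_compose[OF _ measurable_ident])
  then have "indep_var (PiM {1..<t} (\<lambda>_. p)) (\<lambda>\<omega>. restrict (\<lambda>i. \<xi> i \<omega>) {1..<t})
      (PiM {0::nat} (\<lambda>_. p)) (\<lambda>\<omega>. restrict (\<lambda>_. \<xi> j \<omega>) {0::nat})"
    by (simp add: o_def)
  then have "distr M (PiM {1..<t} (\<lambda>_. p)) (\<lambda>\<omega>. restrict (\<lambda>i. \<xi> i \<omega>) {1..<t})
      \<Otimes>\<^sub>M distr M (PiM {0::nat} (\<lambda>_. p)) (\<lambda>\<omega>. restrict (\<lambda>_. \<xi> j \<omega>) {0::nat})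
    = distr M (PiM {1..<t} (\<lambda>_. p) \<Otimes>\<^sub>M PiM {0::nat} (\<lambda>_. p))
      (\<lambda>\<omega>. (restrict (\<lambda>i. \<xi> i \<omega>) {1..<t}, restrict (\<lambda>_. \<xi> j \<omega>) {0::nat}))"
    unfolding indep_var_distribution_eq by blast
  moreover have "distr M (PiM {0::nat} (\<lambda>_. p)) (\<lambda>\<omega>. restrict (\<lambda>_. \<xi> j \<omega>) {0::nat})
      = distr (distr M p (\<xi> j)) (PiM {0::nat} (\<lambda>_. p)) (\<lambda>s. restrict (\<lambda>_. s) {0::nat})"
    using measurable_sample[OF \<open>1 \<le> j\<close>] by (subst distr_distr) (auto simp: o_def)
  ultimately show ?thesis
    using distr_sample[OF \<open>1 \<le> j\<close>] by simp
qed

lemma measurable_past_and_sample: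
  assumes "t \<le> j" "1 \<le> j"
  shows "(\<lambda>\<omega>. (restrict (\<lambda>i. \<xi> i \<omega>) {1..<t}, restrict (\<lambda>_. \<xi> j \<omega>) {0::nat}))
    \<in> measurable M (PiM {1..<t} (\<lambda>_. p) \<Otimes>\<^sub>M PiM {0::nat} (\<lambda>_. p))"
  using assms by (auto intro!: measurable_Pair measurable_restrict measurable_sample)

lemma measurable_delayed_loss_on_past:
  "(\<lambda>z. \<phi> (snd z 0) (dsgd X \<tau> \<sigma> (\<lambda>i. \<phi> (fst z i)) (t + \<tau>)))
    \<in> borel_measurable (PiM {1..<t} (\<lambda>_. p) \<Otimes>\<^sub>M PiM {0::nat} (\<lambda>_. p))"
proof -
  have loss: "(\<lambda>z. \<phi> (fst z) (snd z)) \<in> borel_measurable (p \<Otimes>\<^sub>M borel)"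
    using measurable_loss differentiable_loss
    by (intro borel_measurable_caratheodory differentiable_imp_continuous_within)
  have "(\<lambda>f. dsgd X \<tau> \<sigma> (\<lambda>i. \<phi> (f i)) (t + \<tau>)) \<in> borel_measurable (PiM {1..<t} (\<lambda>_. p))"
    using closed_X convex_X nonempty_X measurable_loss differentiable_loss
    by (intro dsgd_measurable borel_measurable_grad) auto
  then have "(\<lambda>z. (snd z 0, dsgd X \<tau> \<sigma> (\<lambda>i. \<phi> (fst z i)) (t + \<tau>)))
      \<in> measurable (PiM {1..<t} (\<lambda>_. p) \<Otimes>\<^sub>M PiM {0::nat} (\<lambda>_. p)) (p \<Otimes>\<^sub>M borel)"
    by measurable
  from measurable_compose[OF this loss] show ?thesis
    by simp
qed

lemma delayed_loss_on_past:
  "\<phi> (\<xi> j \<omega>) (dsgd X \<tau> \<sigma> (\<lambda>i. \<phi> (\<xi> i \<omega>)) (t + \<tau>))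
    = \<phi> (restrict (\<lambda>_. \<xi> j \<omega>) {0::nat} 0)
        (dsgd X \<tau> \<sigma> (\<lambda>i. \<phi> (restrict (\<lambda>i. \<xi> i \<omega>) {1..<t} i)) (t + \<tau>))"
  by (subst dsgd_cong[where fs'="\<lambda>i. \<phi> (\<xi> i \<omega>)"]) auto

lemma measurable_delayed_loss:
  assumes "t \<le> j" "1 \<le> j"
  shows "(\<lambda>\<omega>. \<phi> (\<xi> j \<omega>) (dsgd X \<tau> \<sigma> (\<lambda>i. \<phi> (\<xi> i \<omega>)) (t + \<tau>))) \<in> borel_measurable M"
  unfolding delayed_loss_on_past[of j _ \<tau> \<sigma> t]
  using measurable_compose[OF measurable_past_and_sample[OF assms] measurable_delayed_loss_on_past]
  by simp

text \<open>The iterate \<open>x (t + \<tau>)\<close> is a function of \<open>\<xi> 1, \<dots>, \<xi> (t - 1)\<close> only, so its loss has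
  the same mean under every sample \<open>\<xi> j\<close> with \<open>j \<ge> t\<close>.\<close>

lemma integral_delayed_loss_eq:
  assumes "1 \<le> t" "t \<le> j"
  shows "(\<integral>\<omega>. \<phi> (\<xi> j \<omega>) (dsgd X \<tau> \<sigma> (\<lambda>i. \<phi> (\<xi> i \<omega>)) (t + \<tau>)) \<partial>M)
    = (\<integral>\<omega>. \<phi> (\<xi> t \<omega>) (dsgd X \<tau> \<sigma> (\<lambda>i. \<phi> (\<xi> i \<omega>)) (t + \<tau>)) \<partial>M)"
proof -
  define h where "h z = \<phi> (snd z 0) (dsgd X \<tau> \<sigma> (\<lambda>i. \<phi> (fst z i)) (t + \<tau>))"
    for z :: "(nat \<Rightarrow> 's) \<times> (nat \<Rightarrow> 's)"
  define law where "law = distr M (PiM {1..<t} (\<lambda>_. p)) (\<lambda>\<omega>. restrict (\<lambda>i. \<xi> i \<omega>) {1..<t})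
      \<Otimes>\<^sub>M distr p (PiM {0::nat} (\<lambda>_. p)) (\<lambda>s. restrict (\<lambda>_. s) {0})"
  have "(\<integral>\<omega>. \<phi> (\<xi> k \<omega>) (dsgd X \<tau> \<sigma> (\<lambda>i. \<phi> (\<xi> i \<omega>)) (t + \<tau>)) \<partial>M) = integral\<^sup>L law h"
    if "t \<le> k" "1 \<le> k" for k
  proof -
    have "(\<integral>\<omega>. \<phi> (\<xi> k \<omega>) (dsgd X \<tau> \<sigma> (\<lambda>i. \<phi> (\<xi> i \<omega>)) (t + \<tau>)) \<partial>M)
        = (\<integral>\<omega>. h (restrict (\<lambda>i. \<xi> i \<omega>) {1..<t}, restrict (\<lambda>_. \<xi> k \<omega>) {0}) \<partial>M)"
      unfolding h_def by (simp only: delayed_loss_on_past[of k _ \<tau> \<sigma> t] fst_conv snd_conv)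
    also have "\<dots> = integral\<^sup>L (distr M (PiM {1..<t} (\<lambda>_. p) \<Otimes>\<^sub>M PiM {0} (\<lambda>_. p))
        (\<lambda>\<omega>. (restrict (\<lambda>i. \<xi> i \<omega>) {1..<t}, restrict (\<lambda>_. \<xi> k \<omega>) {0}))) h"
      unfolding h_def
      by (rule integral_distr[OF measurable_past_and_sample[OF that] measurable_delayed_loss_on_past, symmetric])
    finally show ?thesis
      unfolding law_def distr_past_and_sample[OF that] .
  qed
  from this[of j] this[of t] show ?thesis
    using assms by simp
qed

lemma integrable_delayed_loss:
  assumes "0 \<in> X" "integrable p (\<lambda>s. \<phi> s 0)"
    and bound: "AE s in p. \<forall>y\<in>X. \<bar>\<phi> s y - \<phi> s 0\<bar> \<le> C"
    and "t \<le> j" "1 \<le> j"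
  shows "integrable M (\<lambda>\<omega>. \<phi> (\<xi> j \<omega>) (dsgd X \<tau> \<sigma> (\<lambda>i. \<phi> (\<xi> i \<omega>)) (t + \<tau>)))"
proof (rule Bochner_Integration.integrable_bound)
  show "integrable M (\<lambda>\<omega>. \<bar>\<phi> (\<xi> j \<omega>) 0\<bar> + C)"
    using integrable_sample[OF assms(2) \<open>1 \<le> j\<close>] by auto
  show "(\<lambda>\<omega>. \<phi> (\<xi> j \<omega>) (dsgd X \<tau> \<sigma> (\<lambda>i. \<phi> (\<xi> i \<omega>)) (t + \<tau>))) \<in> borel_measurable M"
    using \<open>t \<le> j\<close> \<open>1 \<le> j\<close> by (rule measurable_delayed_loss)
  show "AE \<omega> in M. norm (\<phi> (\<xi> j \<omega>) (dsgd X \<tau> \<sigma> (\<lambda>i. \<phi> (\<xi> i \<omega>)) (t + \<tau>)))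
      \<le> norm (\<bar>\<phi> (\<xi> j \<omega>) 0\<bar> + C)"
    using AE_sample[OF bound \<open>1 \<le> j\<close>]
  proof eventually_elim
    case (elim \<omega>)
    then have "\<bar>\<phi> (\<xi> j \<omega>) (dsgd X \<tau> \<sigma> (\<lambda>i. \<phi> (\<xi> i \<omega>)) (t + \<tau>)) - \<phi> (\<xi> j \<omega>) 0\<bar> \<le> C"
      using dsgd_in_set[OF closed_X nonempty_X \<open>0 \<in> X\<close>] by blast
    then show ?case
      by simp
  qed
qed

lemma integral_delay_mismatch_eq_0:
  fixes T \<tau> :: nat and \<sigma> :: real
  assumes "0 \<in> X" "integrable p (\<lambda>s. \<phi> s 0)"
    and bound: "AE s in p. \<forall>y\<in>X. \<bar>\<phi> s y - \<phi> s 0\<bar> \<le> C"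
  defines "mismatch \<equiv> \<lambda>\<omega>. \<Sum>t = 1..T. \<phi> (\<xi> (t + \<tau>) \<omega>) (dsgd X \<tau> \<sigma> (\<lambda>i. \<phi> (\<xi> i \<omega>)) (t + \<tau>))
      - \<phi> (\<xi> t \<omega>) (dsgd X \<tau> \<sigma> (\<lambda>i. \<phi> (\<xi> i \<omega>)) (t + \<tau>))"
  shows "integrable M mismatch" "integral\<^sup>L M mismatch = 0"
proof -
  have "integrable M (\<lambda>\<omega>. \<phi> (\<xi> j \<omega>) (dsgd X \<tau> \<sigma> (\<lambda>i. \<phi> (\<xi> i \<omega>)) (t + \<tau>)))"
    if "1 \<le> t" "t \<le> j" for t j
    using that by (intro integrable_delayed_loss[OF assms(1-3)]) auto
  moreover have "(\<integral>\<omega>. \<phi> (\<xi> (t + \<tau>) \<omega>) (dsgd X \<tau> \<sigma> (\<lambda>i. \<phi> (\<xi> i \<omega>)) (t + \<tau>)) \<partial>M)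
      = (\<integral>\<omega>. \<phi> (\<xi> t \<omega>) (dsgd X \<tau> \<sigma> (\<lambda>i. \<phi> (\<xi> i \<omega>)) (t + \<tau>)) \<partial>M)" if "1 \<le> t" for t
    using that by (intro integral_delayed_loss_eq) auto
  ultimately show "integrable M mismatch" "integral\<^sup>L M mismatch = 0"
    unfolding mismatch_def by (auto simp: integral_sum)
qed

lemma integral_boundary_eq_0:
  fixes T \<tau> :: nat
  assumes "integrable p (\<lambda>s. \<phi> s y)"
  defines "boundary \<equiv> \<lambda>\<omega>. \<Sum>k<\<tau>. \<phi> (\<xi> (1 + k) \<omega>) y - \<phi> (\<xi> (T + 1 + k) \<omega>) y"
  shows "integrable M boundary" "integral\<^sup>L M boundary = 0"
  using integrable_sample[OF assms(1)] integral_sample[OF borel_measurable_integrable[OF assms(1)]]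
  unfolding boundary_def by (auto simp: integral_sum)

lemma AE_regret_decomposition_le:
  fixes F L H :: real and \<tau> T :: nat
  assumes "0 \<in> X" "xs \<in> X" "F > 0" "L > 0" "H \<ge> 0"
    and diam: "\<forall>a\<in>X. \<forall>b\<in>X. (1/2) * (norm (a - b))\<^sup>2 \<le> F\<^sup>2"
    and convex: "\<forall>s\<in>space p. convex_on UNIV (\<phi> s)"
    and grad_bound: "AE s in p. \<forall>y\<in>X. norm (grad (\<phi> s) y) \<le> L"
    and smooth: "AE s in p. \<forall>a b. norm (grad (\<phi> s) a - grad (\<phi> s) b) \<le> H * norm (a - b)"
  shows "AE \<omega> in M.
    (\<Sum>t = 1..T. \<phi> (\<xi> t \<omega>) (dsgd X \<tau> (F / L) (\<lambda>i. \<phi> (\<xi> i \<omega>)) t) - \<phi> (\<xi> t \<omega>) xs)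
    \<le> 2 * F * L * sqrt (real T) + H * ((real \<tau>)\<^sup>2 * F\<^sup>2 * (1 + ln (real T))) + real \<tau> * (L * (sqrt 2 * F))
      + ((\<Sum>t = 1..T. \<phi> (\<xi> (t + \<tau>) \<omega>) (dsgd X \<tau> (F / L) (\<lambda>i. \<phi> (\<xi> i \<omega>)) (t + \<tau>))
            - \<phi> (\<xi> t \<omega>) (dsgd X \<tau> (F / L) (\<lambda>i. \<phi> (\<xi> i \<omega>)) (t + \<tau>)))
        + (\<Sum>k<\<tau>. \<phi> (\<xi> (1 + k) \<omega>) 0 - \<phi> (\<xi> (T + 1 + k) \<omega>) 0))"
proof -
  have "AE s in p. (\<forall>y\<in>X. norm (grad (\<phi> s) y) \<le> L)
      \<and> (\<forall>a b. norm (grad (\<phi> s) a - grad (\<phi> s) b) \<le> H * norm (a - b))"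
    using grad_bound smooth by eventually_elim auto
  then have "AE \<omega> in M. \<forall>t\<in>{1..T + \<tau>}.
      (\<forall>y\<in>X. norm (grad (\<phi> (\<xi> t \<omega>)) y) \<le> L)
      \<and> (\<forall>a b. norm (grad (\<phi> (\<xi> t \<omega>)) a - grad (\<phi> (\<xi> t \<omega>)) b) \<le> H * norm (a - b))"
    by (intro AE_finite_allI[OF finite_atLeastAtMost] AE_sample) auto
  then show ?thesis
    using AE_space
  proof eventually_elim
    case (elim \<omega>)
    then show ?case
      using sample_in_space convex differentiable_loss
      by (subst add.assoc[symmetric])
        (intro dsgd_regret_decomposition_le[OF closed_X convex_X nonempty_X assms(1-5) diam]; auto)
  qed
qed

lemma expected_regret_le:
  fixes F L H :: real and \<tau> T :: nat
  assumes "0 \<in> X" "xs \<in> X" "F > 0" "L > 0" "H \<ge> 0"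
    and diam: "\<forall>a\<in>X. \<forall>b\<in>X. (1/2) * (norm (a - b))\<^sup>2 \<le> F\<^sup>2"
    and convex: "\<forall>s\<in>space p. convex_on UNIV (\<phi> s)"
    and grad_bound: "AE s in p. \<forall>y\<in>X. norm (grad (\<phi> s) y) \<le> L"
    and smooth: "AE s in p. \<forall>a b. norm (grad (\<phi> s) a - grad (\<phi> s) b) \<le> H * norm (a - b)"
    and integrable_at_0: "integrable p (\<lambda>s. \<phi> s 0)"
  shows "(\<integral>\<omega>. (\<Sum>t = 1..T. \<phi> (\<xi> t \<omega>) (dsgd X \<tau> (F / L) (\<lambda>i. \<phi> (\<xi> i \<omega>)) t) - \<phi> (\<xi> t \<omega>) xs) \<partial>M)
    \<le> 2 * F * L * sqrt (real T) + H * ((real \<tau>)\<^sup>2 * F\<^sup>2 * (1 + ln (real T))) + real \<tau> * (L * (sqrt 2 * F))"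
proof (rule integral_le_of_AE_le_add_mean_zero[OF AE_regret_decomposition_le[OF assms(1-9)]])
  have "AE s in p. \<forall>y\<in>X. \<bar>\<phi> s y - \<phi> s 0\<bar> \<le> L * (sqrt 2 * F)"
    using grad_bound AE_space
  proof eventually_elim
    case (elim s)
    then show ?case
      using convex differentiable_loss \<open>0 \<in> X\<close> \<open>F > 0\<close>
      by (auto intro!: convex_abs_diff_zero_le[OF _ _ _ diam])
  qed
  from integral_delay_mismatch_eq_0[OF \<open>0 \<in> X\<close> integrable_at_0 this, where T=T and \<tau>=\<tau> and \<sigma>="F / L"]
    integral_boundary_eq_0[OF integrable_at_0, where T=T and \<tau>=\<tau>]
  show "integrable M (\<lambda>\<omega>.
      (\<Sum>t = 1..T. \<phi> (\<xi> (t + \<tau>) \<omega>) (dsgd X \<tau> (F / L) (\<lambda>i. \<phi> (\<xi> i \<omega>)) (t + \<tau>))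
        - \<phi> (\<xi> t \<omega>) (dsgd X \<tau> (F / L) (\<lambda>i. \<phi> (\<xi> i \<omega>)) (t + \<tau>)))
      + (\<Sum>k<\<tau>. \<phi> (\<xi> (1 + k) \<omega>) 0 - \<phi> (\<xi> (T + 1 + k) \<omega>) 0))"
    and "(\<integral>\<omega>. (\<Sum>t = 1..T. \<phi> (\<xi> (t + \<tau>) \<omega>) (dsgd X \<tau> (F / L) (\<lambda>i. \<phi> (\<xi> i \<omega>)) (t + \<tau>))
        - \<phi> (\<xi> t \<omega>) (dsgd X \<tau> (F / L) (\<lambda>i. \<phi> (\<xi> i \<omega>)) (t + \<tau>)))
      + (\<Sum>k<\<tau>. \<phi> (\<xi> (1 + k) \<omega>) 0 - \<phi> (\<xi> (T + 1 + k) \<omega>) 0) \<partial>M) = 0"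
    by auto
  show "0 \<le> 2 * F * L * sqrt (real T) + H * ((real \<tau>)\<^sup>2 * F\<^sup>2 * (1 + ln (real T))) + real \<tau> * (L * (sqrt 2 * F))"
    using \<open>F > 0\<close> \<open>L > 0\<close> \<open>H \<ge> 0\<close>
    by (cases T) (auto intro!: add_nonneg_nonneg mult_nonneg_nonneg)
qed

end

lemma delayed_sgd_constants_le:
  fixes F L H :: real and \<tau> T :: nat
  assumes "F > 0" "L > 0" "H > 0" "\<tau> \<ge> 1" and L_le: "L \<le> 4 * F * H * sqrt (real \<tau>)"
  shows "2 * F * L * sqrt (real T) + H * ((real \<tau>)\<^sup>2 * F\<^sup>2 * (1 + ln (real T))) + real \<tau> * (L * (sqrt 2 * F))
    \<le> (283/10 * F\<^sup>2 * H + 2/3 * F * L + 4/3 * F\<^sup>2 * H * ln (real T)) * (real \<tau>)\<^sup>2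
      + 8/3 * F * L * sqrt (real T)"
proof -
  have "ln (real T) \<ge> 0"
    by (cases T) auto
  have "sqrt (real \<tau>) \<le> real \<tau>"
    using \<open>\<tau> \<ge> 1\<close> real_sqrt_le_mono[of "real \<tau>" "real \<tau> * real \<tau>"] by simp
  moreover have "sqrt 2 \<le> sqrt ((3/2 :: real)\<^sup>2)"
    by (rule real_sqrt_le_mono) (simp add: power2_eq_square)
  ultimately have "real \<tau> * (L * (sqrt 2 * F)) \<le> real \<tau> * ((4 * F * H * real \<tau>) * ((3/2) * F))"
    using L_le \<open>F > 0\<close> \<open>H > 0\<close>
    by (intro mult_left_mono mult_mono) (auto intro: order_trans[OF L_le] mult_left_mono)
  then have "real \<tau> * (L * (sqrt 2 * F)) \<le> 6 * F\<^sup>2 * H * (real \<tau>)\<^sup>2"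
    by (simp add: power2_eq_square mult_ac)
  moreover have "F\<^sup>2 * H * ln (real T) * (real \<tau>)\<^sup>2 \<le> 4/3 * F\<^sup>2 * H * ln (real T) * (real \<tau>)\<^sup>2"
    using \<open>ln (real T) \<ge> 0\<close> \<open>H > 0\<close> by (intro mult_right_mono) auto
  moreover have "0 \<le> F * L * (real \<tau>)\<^sup>2" "0 \<le> F * L * sqrt (real T)" "0 \<le> F\<^sup>2 * H * (real \<tau>)\<^sup>2"
    using \<open>F > 0\<close> \<open>L > 0\<close> \<open>H > 0\<close> by simp_all
  ultimately show ?thesis
    by (simp add: algebra_simps)
qed

theorem theorem8:
  fixes X :: "(real ^ 'n) set"
    and F L H :: real and \<tau> T :: nat
    and M :: "'w measure" and p :: "'s measure"
    and \<xi> :: "nat \<Rightarrow> 'w \<Rightarrow> 's"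
    and \<phi> :: "'s \<Rightarrow> real ^ 'n \<Rightarrow> real"
    and xstar :: "real ^ 'n"
  assumes "closed X" and "convex X" and "X \<noteq> {}" and "0 \<in> X"
    and "F > 0" and "L > 0"
    and diam: "\<forall>x\<in>X. \<forall>x'\<in>X. (1/2) * (norm (x - x'))\<^sup>2 \<le> F\<^sup>2"
    and "prob_space M"
    and iid_indep: "prob_space.indep_vars M (\<lambda>_. p) \<xi> ({1..} :: nat set)"
    and iid_distr: "\<forall>t\<ge>1. distr M p (\<xi> t) = p"
    and meas: "\<forall>x. (\<lambda>s. \<phi> s x) \<in> borel_measurable p"
    and convex: "\<forall>s\<in>space p. convex_on UNIV (\<phi> s)"
    and diff: "\<forall>s\<in>space p. \<forall>x. \<phi> s differentiable at x"
    and grad_bound: "AE s in p. \<forall>x\<in>X. norm (grad (\<phi> s) x) \<le> L"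
    and smooth: "AE s in p. \<forall>x x'. norm (grad (\<phi> s) x - grad (\<phi> s) x') \<le> H * norm (x - x')"
    and "H \<ge> L / (4 * F * sqrt (real \<tau>))"
    and integ: "\<forall>x\<in>X. integrable p (\<lambda>s. \<phi> s x)"
    and xstar: "xstar \<in> X" "\<forall>x\<in>X. (\<integral>s. \<phi> s xstar \<partial>p) \<le> (\<integral>s. \<phi> s x \<partial>p)"
    and "\<tau> \<ge> 1"
  shows "(\<integral>\<omega>. (\<Sum>t = 1..T.
              \<phi> (\<xi> t \<omega>) (dsgd X \<tau> (F / L) (\<lambda>i. \<phi> (\<xi> i \<omega>)) t) - \<phi> (\<xi> t \<omega>) xstar) \<partial>M)
         \<le> (283/10 * F\<^sup>2 * H + 2/3 * F * L + 4/3 * F\<^sup>2 * H * ln (real T)) * (real \<tau>)\<^sup>2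
           + 8/3 * F * L * sqrt (real T)"
proof -
  interpret delayed_sgd_sampling M p \<xi> \<phi> X
    using assms by (intro delayed_sgd_sampling.intro delayed_sgd_sampling_axioms.intro) auto
  have "L \<le> 4 * F * H * sqrt (real \<tau>)"
    using assms by (simp add: divide_le_eq mult_ac)
  then have "0 < H * (4 * F * sqrt (real \<tau>))"
    using \<open>L > 0\<close> by (simp add: mult_ac)
  moreover have "0 < 4 * F * sqrt (real \<tau>)"
    using assms by simp
  ultimately have "H > 0"
    by (rule zero_less_mult_pos2)
  have "(\<integral>\<omega>. (\<Sum>t = 1..T.
      \<phi> (\<xi> t \<omega>) (dsgd X \<tau> (F / L) (\<lambda>i. \<phi> (\<xi> i \<omega>)) t) - \<phi> (\<xi> t \<omega>) xstar) \<partial>M)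
    \<le> 2 * F * L * sqrt (real T) + H * ((real \<tau>)\<^sup>2 * F\<^sup>2 * (1 + ln (real T))) + real \<tau> * (L * (sqrt 2 * F))"
    using assms \<open>H > 0\<close> by (intro expected_regret_le) auto
  also have "\<dots> \<le> (283/10 * F\<^sup>2 * H + 2/3 * F * L + 4/3 * F\<^sup>2 * H * ln (real T)) * (real \<tau>)\<^sup>2
      + 8/3 * F * L * sqrt (real T)"
    using assms \<open>H > 0\<close> \<open>L \<le> 4 * F * H * sqrt (real \<tau>)\<close> by (intro delayed_sgd_constants_le) auto
  finally show ?thesis .
qed

end
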